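(* Let $k\in\mathbb{Z}$, and let $S=\{a_i \bmod d_i : 1\le i\le r\}$ and $S'=\{-a_i+(d_i-1)k \bmod d_i : 1\le i\le r\}$ be exact covering systems. Then the map $\phi_{2,k}:\mathbb{Z}\to\mathbb{Z}$, $\phi_{2,k}(n)=-(n+k)$, is a graph isomorphism from $G_S$ to $G_{S'}$.
   Context: A system of congruences $\{a_i \bmod d_i : 1\le i\le r\}$ with integers $a_i$ and nonzero integers $d_i$ (negative $d_i$ allowed; $n\equiv a \bmod -d$ means $n\equiv a\bmod d$) is an exact covering system if every integer satisfies exactly one of the congruences; congruences are distinguished by their chosen representatives. For such a system $S$, the exact covering system digraph $G_S$ has vertex set $\mathbb{Z}$ and edges $(n,d_in+a_i)$ for all $n\in\mathbb{Z}$, $1\le i\le r$. *)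

theory Defs
  imports Main
begin

text \<open>A system of congruences is a list of pairs (a_i, d_i), meaning n = a_i mod d_i.
  Congruences are distinguished by their position in the list (representatives).\<close>

definition exact_covering_system :: "(int \<times> int) list \<Rightarrow> bool" where
  "exact_covering_system S \<longleftrightarrow>
     (\<forall>i < length S. snd (S ! i) \<noteq> 0) \<and>
     (\<forall>n::int. card {i. i < length S \<and> snd (S ! i) dvd (n - fst (S ! i))} = 1)"

definition ecs_edges :: "(int \<times> int) list \<Rightarrow> (int \<times> int) set" where
  "ecs_edges S = {(n, snd (S ! i) * n + fst (S ! i)) | n i. i < length S}"

definition digraph_iso :: "(int \<Rightarrow> int) \<Rightarrow> (int \<times> int) set \<Rightarrow> (int \<times> int) set \<Rightarrow> bool" where
  "digraph_iso f E E' \<longleftrightarrow> bij f \<and> (\<forall>u v. (u, v) \<in> E \<longleftrightarrow> (f u, f v) \<in> E')"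

end

theory Submission
  imports Defs
begin

text \<open>The reflection \<open>n \<mapsto> -(n + k)\<close> conjugates each affine map \<open>n \<mapsto> d n + a\<close> into
  \<open>n \<mapsto> d n + (-a + (d - 1) k)\<close>. A bijection that conjugates the maps of one system
  into the corresponding maps of another is an isomorphism of their digraphs.\<close>

lemma ecs_edges_iff:
  "(u, v) \<in> ecs_edges S \<longleftrightarrow> (\<exists>i < length S. v = snd (S ! i) * u + fst (S ! i))"
  unfolding ecs_edges_def by blast

lemma digraph_iso_ecs_edgesI:
  assumes "bij f" and "length T = length S"
    and conj: "\<And>i u. i < length S \<Longrightarrow>
                 f (snd (S ! i) * u + fst (S ! i)) = snd (T ! i) * f u + fst (T ! i)"
  shows "digraph_iso f (ecs_edges S) (ecs_edges T)"
proof -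
  have "(u, v) \<in> ecs_edges S \<longleftrightarrow> (f u, f v) \<in> ecs_edges T" for u v
  proof -
    have "v = snd (S ! i) * u + fst (S ! i) \<longleftrightarrow> f v = snd (T ! i) * f u + fst (T ! i)"
      if "i < length S" for i
      using conj[OF that, of u] bij_is_inj[OF \<open>bij f\<close>] by (metis injD)
    then show ?thesis
      using \<open>length T = length S\<close> by (auto simp: ecs_edges_iff)
  qed
  with \<open>bij f\<close> show ?thesis
    unfolding digraph_iso_def by blast
qed

lemma bij_neg_shift: "bij (\<lambda>n::int. - (n + k))"
  by (rule bij_betw_byWitness[where f' = "\<lambda>n. - (n + k)"]) auto

theorem mainTheorem8:
  fixes k :: int and S :: "(int \<times> int) list"
  assumes "exact_covering_system S"
    and "exact_covering_system (map (\<lambda>(a, d). (- a + (d - 1) * k, d)) S)"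
  shows "digraph_iso (\<lambda>n. - (n + k)) (ecs_edges S)
           (ecs_edges (map (\<lambda>(a, d). (- a + (d - 1) * k, d)) S))"
proof (rule digraph_iso_ecs_edgesI[OF bij_neg_shift])
  fix i u
  assume "i < length S"
  then show "- (snd (S ! i) * u + fst (S ! i) + k) =
      snd (map (\<lambda>(a, d). (- a + (d - 1) * k, d)) S ! i) * - (u + k)
      + fst (map (\<lambda>(a, d). (- a + (d - 1) * k, d)) S ! i)"
    by (simp add: case_prod_beta algebra_simps)
qed simp

end
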